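(* Let $\mathcal{X}\subset\mathbb{R}^n$ be a closed convex set, $P$ a probability distribution on a sample space $\mathcal{S}$, $f:\mathcal{X}\times\mathcal{S}\to\mathbb{R}$ such that $f(\cdot;s)$ is $\rho(s)$-weakly convex for each $s$, and $F(x)=\mathbb{E}_P[f(x;S)]$ with $\mathcal{X}^\star=\arg\min_{x\in\mathcal{X}}F(x)$ nonempty. Suppose $F$ is easy to optimize: for each $x^\star\in\mathcal{X}^\star$ and $P$-almost every $s$, $\inf_{x\in\mathcal{X}}f(x;s)=f(x^\star;s)$. Let $x_k$ be generated by the model-based iteration using a model satisfying (C.i)–(C.iv). Then for any $x^\star\in\mathcal{X}^\star$, $$\|x_{k+1}-x^\star\|_2^2\le(1+\alpha_k\rho(S_k))\|x_k-x^\star\|_2^2-[f(x_k;S_k)-f(x^\star;S_k)]\min\Big\{\alpha_k,\frac{f(x_k;S_k)-f(x^\star;S_k)}{\|f'(x_k;S_k)\|_2^2}\Big\}.$$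
   Context: A function $g$ is $\rho$-weakly convex if $x\mapsto g(x)+\frac{\rho}{2}\|x\|_2^2$ is convex. $\partial$ denotes the Fréchet subdifferential and $f'(x;s)$ an element of $\partial f(x;s)$. A model is a family $f_x(\cdot;s):\mathcal{X}\to\mathbb{R}$ with: (C.i) $y\mapsto f_x(y;s)$ convex and subdifferentiable; (C.ii) $f_x(y;s)\le f(y;s)+\frac{\rho(s)}{2}\|y-x\|_2^2$ for all $y\in\mathcal{X}$; (C.iii) $f_x(x;s)=f(x;s)$ and $\partial_y f_x(y;s)|_{y=x}\subset\partial_x f(x;s)$; (C.iv) $f_x(y;s)\ge\inf_{z\in\mathcal{X}}f(z;s)$. The iteration: $S_1,S_2,\ldots$ i.i.d. from $P$, $x_1\in\mathcal{X}$, stepsizes $\alpha_k>0$, $x_{k+1}=\arg\min_{x\in\mathcal{X}}\{f_{x_k}(x;S_k)+\frac{1}{2\alpha_k}\|x-x_k\|_2^2\}$. *)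

theory Defs
  imports "HOL-Analysis.Analysis" "HOL-Probability.Probability"
begin

definition frechet_subdiff :: "'a::euclidean_space set \<Rightarrow> ('a \<Rightarrow> real) \<Rightarrow> 'a \<Rightarrow> 'a set" where
  "frechet_subdiff X h x = {g. x \<in> X \<and>
     (\<forall>e>0. \<exists>d>0. \<forall>y\<in>X. norm (y - x) < d \<longrightarrow>
         h x + inner g (y - x) - e * norm (y - x) \<le> h y)}"

definition weakly_convex_on :: "'a::euclidean_space set \<Rightarrow> real \<Rightarrow> ('a \<Rightarrow> real) \<Rightarrow> bool" where
  "weakly_convex_on X \<rho> h \<longleftrightarrow> convex_on X (\<lambda>x. h x + \<rho> / 2 * (norm x)\<^sup>2)"

end

theory Submission
  imports Defs
begin

(* Let z be a minimiser of F and s the sample of step k.  The step x_{k+1} minimises the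
   (1/alpha)-strongly convex function m + |. - x_k|^2/(2 alpha), where m is the model at x_k,
   which yields the three-point inequality
     m x_{k+1} + |x_{k+1} - x_k|^2/(2 alpha) + |z - x_{k+1}|^2/(2 alpha) <= m z + |z - x_k|^2/(2 alpha).
   By (C.ii) m z <= f(z;s) + rho/2 |z - x_k|^2, and because F is easy to optimize, f(z;s) is a
   lower bound of the model (C.iv).  What remains is a lower bound for
   2 alpha (m x_{k+1} - f(z;s)) + |x_{k+1} - x_k|^2: the subgradient inequality gives
   m x_{k+1} >= f(x_k;s) - |g| |x_{k+1} - x_k|, and an AM-GM estimate turns this into
   D min(alpha, D / |g|^2) with D = f(x_k;s) - f(z;s).
   The argument is pointwise in the sample; it applies almost surely because S_k has law P. *)

lemma nonneg_if_nonneg_perturbation: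
  fixes A B :: real
  assumes "\<And>t. 0 < t \<Longrightarrow> t \<le> 1 \<Longrightarrow> 0 \<le> A + t * B"
  shows "0 \<le> A"
proof (rule tendsto_lowerbound)
  show "((\<lambda>t. A + t * B) \<longlongrightarrow> A) (at_right 0)"
    by (auto intro!: tendsto_eq_intros)
  show "\<forall>\<^sub>F t in at_right 0. 0 \<le> A + t * B"
    unfolding eventually_at_right[OF zero_less_one] using assms by (intro exI[of _ 1]) auto
qed simp

lemma frechet_subdiff_convex_on_le:
  fixes m :: "'a::euclidean_space \<Rightarrow> real"
  assumes "convex X" and m: "convex_on X m" and g: "g \<in> frechet_subdiff X m y" and z: "z \<in> X"
  shows "m y + inner g (z - y) \<le> m z"
proof (cases "z = y")
  case False
  have y: "y \<in> X" using g by (simp add: frechet_subdiff_def)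
  have nz: "norm (z - y) > 0" using False by simp
  have slack: "inner g (z - y) - (m z - m y) \<le> e" if e: "e > 0" for e
  proof -
    have "e / norm (z - y) > 0" using e nz by simp
    then obtain d where d: "d > 0" and loc: "\<forall>w\<in>X. norm (w - y) < d \<longrightarrow>
        m y + inner g (w - y) - e / norm (z - y) * norm (w - y) \<le> m w"
      using g unfolding frechet_subdiff_def by blast
    define t where "t = min 1 (d / (2 * norm (z - y)))"
    have t: "0 < t" "t \<le> 1" using d nz by (auto simp: t_def)
    define w where "w = (1 - t) *\<^sub>R y + t *\<^sub>R z"
    have wX: "w \<in> X" using \<open>convex X\<close> y z t by (simp add: w_def convex_def)
    have wy: "w - y = t *\<^sub>R (z - y)" by (simp add: w_def algebra_simps)
    have nw: "norm (w - y) = t * norm (z - y)" using t by (simp add: wy)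
    have "t \<le> d / (2 * norm (z - y))" by (simp add: t_def)
    then have "norm (w - y) < d" using nz d by (simp add: nw field_simps)
    then have "m y + inner g (w - y) - e / norm (z - y) * norm (w - y) \<le> m w"
      using loc wX by blast
    then have "m y + t * inner g (z - y) - e * t \<le> m w"
      using nz t by (simp add: wy)
    also have "m w \<le> (1 - t) * m y + t * m z"
      using convex_onD[OF m, of t y z] t y z by (simp add: w_def)
    finally have "t * (inner g (z - y) - (m z - m y)) \<le> t * e"
      by (simp add: algebra_simps)
    then show ?thesis using t by simp
  qed
  show ?thesis
    using field_le_epsilon[of "inner g (z - y) - (m z - m y)" 0] slack by simp
qed simp

definition is_prox_point :: "'a::real_normed_vector set \<Rightarrow> ('a \<Rightarrow> real) \<Rightarrow> real \<Rightarrow> 'a \<Rightarrow> 'a \<Rightarrow> bool"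
  where "is_prox_point X m a y p \<longleftrightarrow> p \<in> X \<and>
    (\<forall>w\<in>X. m p + 1 / (2 * a) * (norm (p - y))\<^sup>2 \<le> m w + 1 / (2 * a) * (norm (w - y))\<^sup>2)"

lemma norm_diff_squared_expand:
  fixes u v w :: "'a::real_inner"
  shows "(norm (w - u))\<^sup>2 = (norm (w - v))\<^sup>2 + 2 * inner (v - u) (w - v) + (norm (v - u))\<^sup>2"
  using dot_norm[of "v - u" "w - v"] by simp

lemma prox_point_three_point:
  fixes m :: "'a::real_inner \<Rightarrow> real"
  assumes "convex X" and m: "convex_on X m" and a: "a > 0"
    and prox: "is_prox_point X m a y p" and z: "z \<in> X"
  shows "m p + 1 / (2 * a) * (norm (p - y))\<^sup>2 + 1 / (2 * a) * (norm (z - p))\<^sup>2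
         \<le> m z + 1 / (2 * a) * (norm (z - y))\<^sup>2"
proof -
  have p: "p \<in> X" using prox by (simp add: is_prox_point_def)
  have "0 \<le> (m z - m p + inner (p - y) (z - p) / a) + t * ((norm (z - p))\<^sup>2 / (2 * a))"
    if t: "0 < t" "t \<le> 1" for t
  proof -
    define w where "w = p + t *\<^sub>R (z - p)"
    have "w = (1 - t) *\<^sub>R p + t *\<^sub>R z" by (simp add: w_def algebra_simps)
    then have wX: "w \<in> X" and mw: "m w \<le> (1 - t) * m p + t * m z"
      using \<open>convex X\<close> convex_onD[OF m, of t p z] p z t by (auto simp: convex_def)
    have nw: "(norm (w - y))\<^sup>2 = (norm (p - y))\<^sup>2 + 2 * t * inner (p - y) (z - p) + t\<^sup>2 * (norm (z - p))\<^sup>2"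
      using norm_diff_squared_expand[of w y p] by (simp add: w_def inner_commute power2_eq_square)
    have "m p + 1 / (2 * a) * (norm (p - y))\<^sup>2 \<le> m w + 1 / (2 * a) * (norm (w - y))\<^sup>2"
      using prox wX by (simp add: is_prox_point_def)
    moreover have "1 / (2 * a) * (norm (w - y))\<^sup>2 - 1 / (2 * a) * (norm (p - y))\<^sup>2
        = t * (inner (p - y) (z - p) / a) + t * (t * ((norm (z - p))\<^sup>2 / (2 * a)))"
      unfolding nw using a by (simp add: field_simps power2_eq_square)
    ultimately have "0 \<le> t * ((m z - m p + inner (p - y) (z - p) / a) + t * ((norm (z - p))\<^sup>2 / (2 * a)))"
      using mw by (simp add: algebra_simps)
    then show ?thesis using t by (simp add: zero_le_mult_iff)
  qed
  then have "0 \<le> m z - m p + inner (p - y) (z - p) / a"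
    by (rule nonneg_if_nonneg_perturbation)
  moreover have "1 / (2 * a) * (norm (z - y))\<^sup>2 - 1 / (2 * a) * (norm (p - y))\<^sup>2
      - 1 / (2 * a) * (norm (z - p))\<^sup>2 = inner (p - y) (z - p) / a"
  proof -
    have "(norm (z - y))\<^sup>2 - (norm (p - y))\<^sup>2 - (norm (z - p))\<^sup>2 = 2 * inner (p - y) (z - p)"
      using norm_diff_squared_expand[of z y p] by linarith
    then show ?thesis by (simp add: diff_divide_distrib[symmetric])
  qed
  ultimately show ?thesis by linarith
qed

lemma decrease_mult_min_stepsize_le:
  fixes a D u r G :: real
  assumes a: "0 < a" and D: "0 \<le> D" and u: "0 \<le> u" and lin: "D - G * r \<le> u"
    and r: "0 \<le> r" and G: "0 \<le> G"
  shows "D * (if G = 0 then a else min a (D / G\<^sup>2)) \<le> 2 * a * u + r\<^sup>2"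
proof -
  define c where "c = (if G = 0 then a else min a (D / G\<^sup>2))"
  \<comment> \<open>c G r is split by AM-GM, and c G^2 \<le> D absorbs the resulting (c G)^2.\<close>
  have c0: "0 \<le> c" and ca: "c \<le> a" and cG: "c * G\<^sup>2 \<le> D"
    using a D G by (auto simp: c_def min_def field_simps)
  have "D * c \<le> c * u + c * G * r"
    using mult_right_mono[OF lin[unfolded diff_le_eq] c0] by (simp add: algebra_simps)
  moreover have "c * u \<le> a * u" using ca u by (rule mult_right_mono)
  moreover have "2 * (c * G * r) \<le> (c * G)\<^sup>2 + r\<^sup>2"
    using sum_squares_bound[of "c * G" r] by simp
  moreover have "(c * G)\<^sup>2 \<le> c * D"
    using mult_left_mono[OF cG c0] by (simp add: power2_eq_square algebra_simps)
  ultimately show ?thesis unfolding c_def[symmetric] by (simp add: algebra_simps)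
qed

lemma prox_step_dist_squared_le:
  fixes m :: "'a::euclidean_space \<Rightarrow> real"
  assumes "convex X" and m: "convex_on X m" and a: "a > 0" and z: "z \<in> X"
    and prox: "is_prox_point X m a y p" and g: "g \<in> frechet_subdiff X m y"
    and lower_p: "L \<le> m p" and lower_y: "L \<le> m y"
    and upper_z: "m z \<le> L + \<rho> / 2 * (norm (z - y))\<^sup>2"
  shows "(norm (p - z))\<^sup>2 \<le> (1 + a * \<rho>) * (norm (y - z))\<^sup>2
           - (m y - L) * (if g = 0 then a else min a ((m y - L) / (norm g)\<^sup>2))"
proof -
  have p: "p \<in> X" using prox by (simp add: is_prox_point_def)
  have "m y - norm g * norm (p - y) \<le> m y + inner g (p - y)"
    using norm_cauchy_schwarz[of "-g" "p - y"] by simp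
  also have "\<dots> \<le> m p" using frechet_subdiff_convex_on_le[OF \<open>convex X\<close> m g p] .
  finally have "(m y - L) * (if g = 0 then a else min a ((m y - L) / (norm g)\<^sup>2))
      \<le> 2 * a * (m p - L) + (norm (p - y))\<^sup>2"
    using decrease_mult_min_stepsize_le[where D = "m y - L" and u = "m p - L"
        and r = "norm (p - y)" and G = "norm g"]
      a lower_p lower_y by simp
  moreover have "2 * a * m p + (norm (p - y))\<^sup>2 + (norm (z - p))\<^sup>2 \<le> 2 * a * m z + (norm (z - y))\<^sup>2"
    using mult_left_mono[OF prox_point_three_point[OF \<open>convex X\<close> m a prox z], of "2 * a"] a
    by (simp add: distrib_left)
  moreover have "2 * a * m z \<le> 2 * a * L + a * \<rho> * (norm (z - y))\<^sup>2"
    using mult_left_mono[OF upper_z, of "2 * a"] a by (simp add: algebra_simps)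
  ultimately show ?thesis
    by (simp add: norm_minus_commute algebra_simps)
qed

theorem lemma1:
  fixes X :: "'a::euclidean_space set"
    and P :: "'s measure"
    and f :: "'a \<Rightarrow> 's \<Rightarrow> real"
    and \<rho> :: "'s \<Rightarrow> real"
    and model :: "'a \<Rightarrow> 's \<Rightarrow> 'a \<Rightarrow> real"
    and M :: "'w measure"
    and S :: "nat \<Rightarrow> 'w \<Rightarrow> 's"
    and x :: "nat \<Rightarrow> 'w \<Rightarrow> 'a"
    and x1 :: 'a
    and \<alpha> :: "nat \<Rightarrow> real"
    and F :: "'a \<Rightarrow> real"
    and Xstar :: "'a set"
  assumes X_closed: "closed X" and X_convex: "convex X"
    and P_prob: "prob_space P"
    and f_wc: "\<forall>s\<in>space P. weakly_convex_on X (\<rho> s) (\<lambda>y. f y s)"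
    and f_int: "\<forall>y\<in>X. integrable P (\<lambda>s. f y s)"
    and F_def: "\<forall>y. F y = (\<integral>s. f y s \<partial>P)"
    and Xstar_def: "Xstar = {y \<in> X. \<forall>z\<in>X. F y \<le> F z}"
    and Xstar_ne: "Xstar \<noteq> {}"
    and easy: "\<forall>xs\<in>Xstar. AE s in P. (INF z\<in>X. ereal (f z s)) = ereal (f xs s)"
    and Ci: "\<forall>y\<in>X. \<forall>s\<in>space P. convex_on X (model y s) \<and>
               (\<forall>z\<in>X. frechet_subdiff X (model y s) z \<noteq> {})"
    and Cii: "\<forall>y\<in>X. \<forall>s\<in>space P. \<forall>z\<in>X.
               model y s z \<le> f z s + \<rho> s / 2 * (norm (z - y))\<^sup>2"
    and Ciii: "\<forall>y\<in>X. \<forall>s\<in>space P. model y s y = f y s \<and>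
               frechet_subdiff X (model y s) y \<subseteq> frechet_subdiff X (\<lambda>z. f z s) y"
    and Civ: "\<forall>y\<in>X. \<forall>s\<in>space P. \<forall>z\<in>X. (INF w\<in>X. ereal (f w s)) \<le> ereal (model y s z)"
    and M_prob: "prob_space M"
    and S_meas: "\<forall>k. S k \<in> measurable M P"
    and S_distr: "\<forall>k. distr M P (S k) = P"
    and S_indep: "prob_space.indep_vars M (\<lambda>_. P) S UNIV"
    and x1_X: "x1 \<in> X"
    and x_init: "\<forall>\<omega>\<in>space M. x 0 \<omega> = x1"
    and \<alpha>_pos: "\<forall>k. \<alpha> k > 0"
    and x_step: "\<forall>k. \<forall>\<omega>\<in>space M. x (Suc k) \<omega> \<in> X \<and>
               (\<forall>y\<in>X. model (x k \<omega>) (S k \<omega>) (x (Suc k) \<omega>)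
                         + 1 / (2 * \<alpha> k) * (norm (x (Suc k) \<omega> - x k \<omega>))\<^sup>2
                      \<le> model (x k \<omega>) (S k \<omega>) y + 1 / (2 * \<alpha> k) * (norm (y - x k \<omega>))\<^sup>2)"
  shows "\<forall>xs\<in>Xstar. \<forall>k. AE \<omega> in M.
           \<forall>g\<in>frechet_subdiff X (model (x k \<omega>) (S k \<omega>)) (x k \<omega>).
             (norm (x (Suc k) \<omega> - xs))\<^sup>2
               \<le> (1 + \<alpha> k * \<rho> (S k \<omega>)) * (norm (x k \<omega> - xs))\<^sup>2
                 - (f (x k \<omega>) (S k \<omega>) - f xs (S k \<omega>)) *
                   (if g = 0 then \<alpha> k
                    else min (\<alpha> k) ((f (x k \<omega>) (S k \<omega>) - f xs (S k \<omega>)) / (norm g)\<^sup>2))"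
proof (intro ballI allI, goal_cases)
  case (1 xs k)
  then have xs: "xs \<in> X" and easy_xs: "AE s in P. (INF z\<in>X. ereal (f z s)) = ereal (f xs s)"
    using Xstar_def easy by auto
  have "AE s in distr M P (S k). (INF z\<in>X. ereal (f z s)) = ereal (f xs s)"
    by (subst S_distr[rule_format]) (rule easy_xs)
  then have "AE \<omega> in M. (INF z\<in>X. ereal (f z (S k \<omega>))) = ereal (f xs (S k \<omega>))"
    by (rule AE_distrD[OF S_meas[rule_format]])
  with AE_space show ?case
  proof eventually_elim
    case (elim \<omega>)
    let ?y = "x k \<omega>" and ?s = "S k \<omega>"
    have y: "?y \<in> X" using x1_X x_init x_step elim(1) by (cases k) auto
    have s: "?s \<in> space P" using measurable_space[OF S_meas[rule_format] elim(1)] .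
    have prox: "is_prox_point X (model ?y ?s) (\<alpha> k) ?y (x (Suc k) \<omega>)"
      using x_step elim(1) by (simp add: is_prox_point_def)
    have p: "x (Suc k) \<omega> \<in> X" using prox by (simp add: is_prox_point_def)
    have lower: "f xs ?s \<le> model ?y ?s z" if "z \<in> X" for z
      using Civ y s that elim(2) by fastforce
    have cvx: "convex_on X (model ?y ?s)" using Ci y s by blast
    have upper: "model ?y ?s xs \<le> f xs ?s + \<rho> ?s / 2 * (norm (xs - ?y))\<^sup>2"
      using Cii y s xs by blast
    have model_y: "model ?y ?s ?y = f ?y ?s" using Ciii y s by blast
    show ?case
      using prox_step_dist_squared_le[OF X_convex cvx \<alpha>_pos[rule_format] xs prox _
          lower[OF p] lower[OF y] upper]
      unfolding model_y by blast
  qed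
qed

end
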